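(* Let $N\in\mathbb{N}$ and let $\mathbf{X}$ be an $\mathbb{R}^N$-valued Gaussian random vector with zero mean and symmetric positive-definite covariance matrix $\Sigma$. Then for all $\mathbf{j},\mathbf{k}\in\mathbb{N}_0^N$, $$\mathbb{E}[H_{\mathbf{j}}(\mathbf{X};\Sigma)H_{\mathbf{k}}(\mathbf{X};\Sigma)]=\begin{cases}\mathbf{j}!\,\mathbf{k}!\displaystyle\sum_{\substack{\theta\in\mathbb{N}_0^{N\times N}\\ \mathbf{r}(\theta)=\mathbf{j},\ \mathbf{c}(\theta)=\mathbf{k}}}\frac{(\Sigma^{-1})^{\theta}}{\theta!}, & |\mathbf{j}|=|\mathbf{k}|,\\ 0, & |\mathbf{j}|\neq|\mathbf{k}|.\end{cases}$$ In particular, $$\mathbb{E}[H_{\mathbf{j}}^2(\mathbf{X};\Sigma)]=(\mathbf{j}!)^2\sum_{\substack{\theta\in\mathbb{N}_0^{N\times N}\\ \mathbf{r}(\theta)=\mathbf{c}(\theta)=\mathbf{j}}}\frac{(\Sigma^{-1})^{\theta}}{\theta!}.$$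
   Context: For a multi-index $\mathbf{j}\in\mathbb{N}_0^N$: $|\mathbf{j}|=j_1+\dots+j_N$, $\mathbf{j}!=j_1!\cdots j_N!$, $(\partial/\partial\mathbf{x})^{\mathbf{j}}=\partial^{|\mathbf{j}|}/\partial x_1^{j_1}\cdots\partial x_N^{j_N}$. The density of $\mathbf{X}$ is $\phi(\mathbf{x};\Sigma)=(2\pi)^{-N/2}(\det\Sigma)^{-1/2}\exp(-\tfrac12\mathbf{x}^T\Sigma^{-1}\mathbf{x})$, and $H_{\mathbf{j}}(\mathbf{x};\Sigma)=\frac{(-1)^{|\mathbf{j}|}}{\phi(\mathbf{x};\Sigma)}\left(\frac{\partial}{\partial\mathbf{x}}\right)^{\mathbf{j}}\phi(\mathbf{x};\Sigma)$. For an index matrix $\theta=(\theta_{pq})\in\mathbb{N}_0^{N\times N}$: $\mathbf{r}(\theta)=(r_1,\dots,r_N)$ with $r_p=\sum_{q=1}^N\theta_{pq}$ (row sums), $\mathbf{c}(\theta)=(c_1,\dots,c_N)$ with $c_q=\sum_{p=1}^N\theta_{pq}$ (column sums), $\theta!=\prod_{p,q=1}^N\theta_{pq}!$, and $(\Sigma^{-1})^\theta=\prod_{p,q=1}^N\big((\Sigma^{-1})_{pq}\big)^{\theta_{pq}}$, where $(\Sigma^{-1})_{pq}$ is the $(p,q)$ entry of $\Sigma^{-1}$. *)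

theory Defs
  imports "HOL-Probability.Probability"
begin

text \<open>Multi-indices in N_0^N are functions 'n => nat on a finite index type 'n
  (N = CARD('n)); index matrices are functions 'n => 'n => nat.\<close>

definition mi_abs :: "('n::finite \<Rightarrow> nat) \<Rightarrow> nat" where
  "mi_abs j = (\<Sum>i\<in>UNIV. j i)"

definition mi_fact :: "('n::finite \<Rightarrow> nat) \<Rightarrow> real" where
  "mi_fact j = (\<Prod>i\<in>UNIV. fact (j i))"

definition partial_deriv :: "'n::finite \<Rightarrow> (real^'n \<Rightarrow> real) \<Rightarrow> real^'n \<Rightarrow> real" where
  "partial_deriv i f x = deriv (\<lambda>t. f (x + t *\<^sub>R axis i (1::real))) 0"

fun pd_iter :: "nat \<Rightarrow> ('n::finite \<Rightarrow> nat) \<Rightarrow> (real^'n \<Rightarrow> real) \<Rightarrow> real^'n \<Rightarrow> real" where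
  "pd_iter 0 j f = f"
| "pd_iter (Suc m) j f =
     (let i = (SOME i. 0 < j i) in partial_deriv i (pd_iter m (j(i := j i - 1)) f))"

definition mi_deriv :: "('n::finite \<Rightarrow> nat) \<Rightarrow> (real^'n \<Rightarrow> real) \<Rightarrow> real^'n \<Rightarrow> real" where
  "mi_deriv j f = pd_iter (mi_abs j) j f"

definition gauss_density :: "real^'n^'n \<Rightarrow> real^'n \<Rightarrow> real" where
  "gauss_density S x = (2 * pi) powr (- real CARD('n) / 2) * (det S) powr (- 1 / 2)
      * exp (- (1 / 2) * (x \<bullet> (matrix_inv S *v x)))"

definition hermite :: "('n::finite \<Rightarrow> nat) \<Rightarrow> real^'n^'n \<Rightarrow> real^'n \<Rightarrow> real" where
  "hermite j S x = (-1) ^ mi_abs j / gauss_density S x * mi_deriv j (gauss_density S) x"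

definition sym_posdef :: "real^'n^'n \<Rightarrow> bool" where
  "sym_posdef S \<longleftrightarrow> transpose S = S \<and> (\<forall>x. x \<noteq> 0 \<longrightarrow> 0 < x \<bullet> (S *v x))"

definition index_mats :: "('n::finite \<Rightarrow> nat) \<Rightarrow> ('n \<Rightarrow> nat) \<Rightarrow> ('n \<Rightarrow> 'n \<Rightarrow> nat) set" where
  "index_mats j k = {\<theta>. (\<forall>p. (\<Sum>q\<in>UNIV. \<theta> p q) = j p) \<and> (\<forall>q. (\<Sum>p\<in>UNIV. \<theta> p q) = k q)}"

definition mat_fact :: "('n::finite \<Rightarrow> 'n \<Rightarrow> nat) \<Rightarrow> real" where
  "mat_fact \<theta> = (\<Prod>p\<in>UNIV. \<Prod>q\<in>UNIV. fact (\<theta> p q))"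

definition mat_pow :: "real^'n^'n \<Rightarrow> ('n::finite \<Rightarrow> 'n \<Rightarrow> nat) \<Rightarrow> real" where
  "mat_pow A \<theta> = (\<Prod>p\<in>UNIV. \<Prod>q\<in>UNIV. (A $ p $ q) ^ \<theta> p q)"

end

(*
  Write P for the inverse covariance, y = P x, and R_i q = y_i q - d_i q for the raising operator.
  Then d_i (q phi) = - (R_i q) phi, so H_j = R_i H_(j - e_i) whenever j_i > 0; hence the H_j are
  polynomials, and commuting d_i past R_a yields the Appell property
  d_i H_k = sum_l P_il k_l H_(k - e_l).  Since int (R_i q) phi = - int d_i (q phi) = 0 for every
  polynomial q, the identity H_j H_k = R_i (H_(j - e_i) H_k) + H_(j - e_i) d_i H_k gives the recursion
    E[H_j H_k] = sum_l P_il k_l E[H_(j - e_i) H_(k - e_l)].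
  Splitting the sum over index matrices theta according to the entry theta_il shows that
  j! k! sum_theta P^theta / theta! satisfies the same recursion; both sides agree for j = 0, and
  induction on |j| concludes.
*)
theory Submission
  imports Defs "HOL-Analysis.Weierstrass_Theorems"
begin

section \<open>Polynomial functions and their partial derivatives\<close>

(* The library rule is only accessible under its theory-qualified name. *)
lemmas real_polynomial_function_mult = real_polynomial_function.intros(4)

lemma partial_deriv_eqI:
  assumes "((\<lambda>t. f (x + t *\<^sub>R axis i 1)) has_real_derivative D) (at 0)"
  shows "partial_deriv i f x = D"
  unfolding partial_deriv_def using assms by (rule DERIV_imp_deriv)

lemma real_polynomial_function_line_derivative:
  fixes p :: "real^'n \<Rightarrow> real"
  assumes "real_polynomial_function p"
  shows "\<exists>p'. real_polynomial_function p' \<and>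
    (\<forall>x t. ((\<lambda>t. p (x + t *\<^sub>R axis i 1)) has_real_derivative p' (x + t *\<^sub>R axis i 1)) (at t))"
  using assms
proof induction
  case (linear f)
  then interpret bounded_linear f .
  show ?case
    by (intro exI[of _ "\<lambda>_. f (axis i 1)"] conjI allI)
       (auto simp: add scale intro!: derivative_eq_intros)
next
  case (const c)
  show ?case by (intro exI[of _ "\<lambda>_. 0"]) auto
next
  case (add f g)
  then obtain f' g' where "real_polynomial_function f'" "real_polynomial_function g'"
    and "\<And>x t. ((\<lambda>t. f (x + t *\<^sub>R axis i 1)) has_real_derivative f' (x + t *\<^sub>R axis i 1)) (at t)"
    and "\<And>x t. ((\<lambda>t. g (x + t *\<^sub>R axis i 1)) has_real_derivative g' (x + t *\<^sub>R axis i 1)) (at t)"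
    by blast
  then show ?case
    by (intro exI[of _ "\<lambda>x. f' x + g' x"]) (auto intro: DERIV_add)
next
  case (mult f g)
  then obtain f' g' where "real_polynomial_function f'" "real_polynomial_function g'"
    and "\<And>x t. ((\<lambda>t. f (x + t *\<^sub>R axis i 1)) has_real_derivative f' (x + t *\<^sub>R axis i 1)) (at t)"
    and "\<And>x t. ((\<lambda>t. g (x + t *\<^sub>R axis i 1)) has_real_derivative g' (x + t *\<^sub>R axis i 1)) (at t)"
    by blast
  with mult.hyps show ?case
    by (intro exI[of _ "\<lambda>x. f' x * g x + f x * g' x"])
       (auto intro!: derivative_eq_intros simp: algebra_simps)
qed

lemma
  fixes p :: "real^'n \<Rightarrow> real"
  assumes "real_polynomial_function p"
  shows real_polynomial_function_partial_deriv: "real_polynomial_function (partial_deriv i p)"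
    and has_real_derivative_partial_deriv:
      "((\<lambda>t. p (x + t *\<^sub>R axis i 1)) has_real_derivative partial_deriv i p (x + u *\<^sub>R axis i 1)) (at u)"
proof -
  obtain p' where p': "real_polynomial_function p'"
    "\<And>x t. ((\<lambda>t. p (x + t *\<^sub>R axis i 1)) has_real_derivative p' (x + t *\<^sub>R axis i 1)) (at t)"
    using real_polynomial_function_line_derivative[OF assms] by blast
  have "partial_deriv i p = p'"
    using partial_deriv_eqI[OF p'(2)[where t = 0]] by fastforce
  with p' show "real_polynomial_function (partial_deriv i p)"
    "((\<lambda>t. p (x + t *\<^sub>R axis i 1)) has_real_derivative partial_deriv i p (x + u *\<^sub>R axis i 1)) (at u)"
    by simp_all
qed

lemma partial_deriv_bounded_linear:
  "bounded_linear f \<Longrightarrow> partial_deriv i f = (\<lambda>_. f (axis i 1))"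
  by (intro ext partial_deriv_eqI) (auto simp: linear_simps intro!: derivative_eq_intros)

lemma partial_deriv_const [simp]: "partial_deriv i (\<lambda>x. c) = (\<lambda>x. 0)"
  by (intro ext partial_deriv_eqI) simp

lemma partial_deriv_add:
  assumes "real_polynomial_function f" "real_polynomial_function g"
  shows "partial_deriv i (\<lambda>x. f x + g x) = (\<lambda>x. partial_deriv i f x + partial_deriv i g x)"
  by (intro ext partial_deriv_eqI DERIV_add[OF has_real_derivative_partial_deriv[where u = 0, OF assms(1)]
        has_real_derivative_partial_deriv[where u = 0, OF assms(2)], simplified])

lemma partial_deriv_diff:
  assumes "real_polynomial_function f" "real_polynomial_function g"
  shows "partial_deriv i (\<lambda>x. f x - g x) = (\<lambda>x. partial_deriv i f x - partial_deriv i g x)"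
  by (intro ext partial_deriv_eqI DERIV_diff[OF has_real_derivative_partial_deriv[where u = 0, OF assms(1)]
        has_real_derivative_partial_deriv[where u = 0, OF assms(2)], simplified])

lemma partial_deriv_mult:
  assumes "real_polynomial_function f" "real_polynomial_function g"
  shows "partial_deriv i (\<lambda>x. f x * g x) = (\<lambda>x. partial_deriv i f x * g x + f x * partial_deriv i g x)"
  using DERIV_mult[OF has_real_derivative_partial_deriv[where u = 0, OF assms(1)]
        has_real_derivative_partial_deriv[where u = 0, OF assms(2)]]
  by (intro ext partial_deriv_eqI) (simp add: mult.commute)

lemma partial_deriv_cmult:
  "real_polynomial_function f \<Longrightarrow> partial_deriv i (\<lambda>x. c * f x) = (\<lambda>x. c * partial_deriv i f x)"
  using partial_deriv_mult[of "\<lambda>_. c" f i] by auto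

lemma partial_deriv_sum:
  "finite A \<Longrightarrow> (\<And>a. a \<in> A \<Longrightarrow> real_polynomial_function (f a)) \<Longrightarrow>
    partial_deriv i (\<lambda>x. \<Sum>a\<in>A. f a x) = (\<lambda>x. \<Sum>a\<in>A. partial_deriv i (f a) x)"
proof (induction A rule: finite_induct)
  case (insert a A)
  then show ?case
    by (simp add: partial_deriv_add real_polynomial_function_sum)
qed simp

lemma partial_deriv_commute:
  assumes "real_polynomial_function p"
  shows "partial_deriv a (partial_deriv b p) = partial_deriv b (partial_deriv a p)"
  using assms
proof induction
  case (linear f)
  then show ?case
    by (simp add: partial_deriv_bounded_linear)
next
  case (add f g)
  then show ?case
    by (simp add: partial_deriv_add real_polynomial_function_partial_deriv)
next
  case (mult f g)
  then show ?case
    by (simp add: partial_deriv_mult partial_deriv_add real_polynomial_function_partial_deriv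
        real_polynomial_function_mult algebra_simps)
qed simp

lemma continuous_on_real_polynomial_function:
  "real_polynomial_function p \<Longrightarrow> continuous_on A p"
  by (simp add: continuous_at_imp_continuous_on continuous_real_polymonial_function)

lemma real_polynomial_function_growth:
  assumes "real_polynomial_function p"
  shows "\<exists>C d. \<forall>x. \<bar>p x\<bar> \<le> C * (1 + norm x) ^ d"
  using assms
proof induction
  case (linear f)
  then obtain K where "\<And>x. norm (f x) \<le> norm x * K"
    using bounded_linear.bounded by blast
  moreover have "norm x * K \<le> \<bar>K\<bar> * (1 + norm x) ^ 1" for x :: 'a
    using mult_left_mono[OF abs_ge_self[of K] norm_ge_zero[of x]]
      mult_right_mono[of "norm x" "1 + norm x" "\<bar>K\<bar>"] by (simp add: mult.commute)
  ultimately have "\<bar>f x\<bar> \<le> \<bar>K\<bar> * (1 + norm x) ^ 1" for x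
    by (metis order.trans real_norm_def)
  then show ?case by blast
next
  case (const c)
  show ?case
    by (intro exI[of _ "\<bar>c\<bar>"] exI[of _ 0]) simp
next
  case (add f g)
  then obtain C1 d1 C2 d2 where f: "\<And>x. \<bar>f x\<bar> \<le> C1 * (1 + norm x) ^ d1"
    and g: "\<And>x. \<bar>g x\<bar> \<le> C2 * (1 + norm x) ^ d2"
    by blast
  have "\<bar>f x + g x\<bar> \<le> (\<bar>C1\<bar> + \<bar>C2\<bar>) * (1 + norm x) ^ (d1 + d2)" for x
  proof -
    have "(1 + norm x) ^ d1 \<le> (1 + norm x) ^ (d1 + d2)" "(1 + norm x) ^ d2 \<le> (1 + norm x) ^ (d1 + d2)"
      by (simp_all add: power_increasing)
    then have "C1 * (1 + norm x) ^ d1 \<le> \<bar>C1\<bar> * (1 + norm x) ^ (d1 + d2)"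
        "C2 * (1 + norm x) ^ d2 \<le> \<bar>C2\<bar> * (1 + norm x) ^ (d1 + d2)"
      by (intro mult_mono abs_ge_self; simp)+
    with f[of x] g[of x] show ?thesis
      by (simp add: algebra_simps)
  qed
  then show ?case by blast
next
  case (mult f g)
  then obtain C1 d1 C2 d2 where f: "\<And>x. \<bar>f x\<bar> \<le> C1 * (1 + norm x) ^ d1"
    and g: "\<And>x. \<bar>g x\<bar> \<le> C2 * (1 + norm x) ^ d2"
    by blast
  have "\<bar>f x * g x\<bar> \<le> (C1 * C2) * (1 + norm x) ^ (d1 + d2)" for x
    using mult_mono[OF f[of x] g[of x] order.trans[OF abs_ge_zero f[of x]] abs_ge_zero] by (simp add: abs_mult power_add algebra_simps)
  then show ?case by blast
qed

lemma bounded_linear_matrix_component: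
  fixes P :: "real^'n^'m"
  shows "bounded_linear (\<lambda>x. (P *v x) $ i)"
  by (rule bounded_linear_compose[OF bounded_linear_vec_nth matrix_vector_mul_bounded_linear])

lemma real_polynomial_function_matrix_component:
  fixes P :: "real^'n^'m"
  shows "real_polynomial_function (\<lambda>x. (P *v x) $ i)"
  by (intro real_polynomial_function.intros bounded_linear_matrix_component)

lemma partial_deriv_matrix_component:
  fixes P :: "real^'n^'m"
  shows "partial_deriv a (\<lambda>x. (P *v x) $ i) = (\<lambda>_. P $ i $ a)"
  by (simp add: partial_deriv_bounded_linear[OF bounded_linear_matrix_component]
      matrix_vector_mult_basis column_def)

lemma real_polynomial_function_quadratic_form:
  fixes P :: "real^'n^'n"
  shows "real_polynomial_function (\<lambda>x. x \<bullet> (P *v x))"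
proof -
  have "(\<lambda>x. x \<bullet> (P *v x)) = (\<lambda>x. \<Sum>a\<in>UNIV. x $ a * (P *v x) $ a)"
    by (simp add: inner_vec_def)
  then show ?thesis
    by (auto intro!: real_polynomial_function_sum bounded_linear_matrix_component bounded_linear_vec_nth)
qed

lemma partial_deriv_quadratic_form:
  fixes P :: "real^'n^'n"
  assumes "transpose P = P"
  shows "partial_deriv i (\<lambda>x. x \<bullet> (P *v x)) = (\<lambda>x. 2 * (P *v x) $ i)"
proof (intro ext partial_deriv_eqI)
  fix x
  let ?e = "axis i (1::real)"
  have "?e \<bullet> (P *v x) = x \<bullet> (P *v ?e)"
    by (metis assms dot_lmul_matrix inner_commute vector_transpose_matrix)
  moreover have "?e \<bullet> (P *v x) = (P *v x) $ i"
    by (simp add: inner_axis')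
  ultimately have "(\<lambda>t. (x + t *\<^sub>R ?e) \<bullet> (P *v (x + t *\<^sub>R ?e))) =
      (\<lambda>t. x \<bullet> (P *v x) + t * (2 * (P *v x) $ i) + t\<^sup>2 * (?e \<bullet> (P *v ?e)))"
    by (auto simp: matrix_vector_right_distrib matrix_vector_mult_scaleR inner_add_left
        inner_add_right power2_eq_square algebra_simps)
  then show "((\<lambda>t. (x + t *\<^sub>R ?e) \<bullet> (P *v (x + t *\<^sub>R ?e))) has_real_derivative
      2 * (P *v x) $ i) (at 0)"
    by (auto intro!: derivative_eq_intros)
qed

lemma quadratic_form_lower_bound:
  fixes P :: "real^'n^'n"
  assumes "\<And>x. x \<noteq> 0 \<Longrightarrow> 0 < x \<bullet> (P *v x)"
  obtains c where "0 < c" "\<And>x. c * (norm x)\<^sup>2 \<le> x \<bullet> (P *v x)"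
proof -
  have "sphere (0::real^'n) 1 \<noteq> {}"
    using norm_axis_1[of "undefined::'n"] by (metis empty_iff mem_sphere_0)
  then obtain u where u: "u \<in> sphere 0 1"
    and min: "\<And>y. y \<in> sphere 0 1 \<Longrightarrow> u \<bullet> (P *v u) \<le> y \<bullet> (P *v y)"
    using continuous_attains_inf[OF compact_sphere _ continuous_on_real_polynomial_function,
        OF _ real_polynomial_function_quadratic_form[of P]] by blast
  have "(u \<bullet> (P *v u)) * (norm x)\<^sup>2 \<le> x \<bullet> (P *v x)" for x
  proof (cases "x = 0")
    case False
    then have "u \<bullet> (P *v u) \<le> (x /\<^sub>R norm x) \<bullet> (P *v (x /\<^sub>R norm x))"
      by (intro min) simp
    also have "\<dots> = x \<bullet> (P *v x) / (norm x)\<^sup>2"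
      by (simp add: matrix_vector_mult_scaleR power2_eq_square divide_inverse)
    finally show ?thesis
      using False by (simp add: field_simps)
  qed simp
  moreover have "0 < u \<bullet> (P *v u)"
    using u by (intro assms) auto
  ultimately show ?thesis
    using that by blast
qed

section \<open>The raising operator\<close>

definition hermite_raise :: "real^'n^'n \<Rightarrow> 'n \<Rightarrow> (real^'n \<Rightarrow> real) \<Rightarrow> real^'n \<Rightarrow> real" where
  "hermite_raise P i q x = (P *v x) $ i * q x - partial_deriv i q x"

lemma real_polynomial_function_hermite_raise:
  "real_polynomial_function q \<Longrightarrow> real_polynomial_function (hermite_raise P i q)"
  unfolding hermite_raise_def[abs_def]
  by (intro real_polynomial_function_diff real_polynomial_function_mult
      real_polynomial_function_matrix_component real_polynomial_function_partial_deriv)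

lemma hermite_raise_cmult:
  "real_polynomial_function q \<Longrightarrow> hermite_raise P i (\<lambda>x. c * q x) = (\<lambda>x. c * hermite_raise P i q x)"
  by (simp add: hermite_raise_def[abs_def] partial_deriv_cmult algebra_simps)

lemma hermite_raise_sum:
  assumes "finite A" "\<And>l. l \<in> A \<Longrightarrow> real_polynomial_function (f l)"
  shows "hermite_raise P i (\<lambda>x. \<Sum>l\<in>A. c l * f l x) = (\<lambda>x. \<Sum>l\<in>A. c l * hermite_raise P i (f l) x)"
  using assms
  by (simp add: hermite_raise_def[abs_def] partial_deriv_sum partial_deriv_cmult
      real_polynomial_function.intros sum_distrib_left sum_subtractf algebra_simps)

lemma hermite_raise_mult:
  assumes "real_polynomial_function f" "real_polynomial_function g"
  shows "hermite_raise P i (\<lambda>x. f x * g x) = (\<lambda>x. hermite_raise P i f x * g x - f x * partial_deriv i g x)"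
  using assms by (simp add: hermite_raise_def[abs_def] partial_deriv_mult algebra_simps)

lemma partial_deriv_hermite_raise:
  assumes "real_polynomial_function q"
  shows "partial_deriv a (hermite_raise P i q) =
    (\<lambda>x. hermite_raise P i (partial_deriv a q) x + P $ i $ a * q x)"
  using assms unfolding hermite_raise_def[abs_def]
  by (simp add: partial_deriv_diff partial_deriv_mult partial_deriv_commute partial_deriv_matrix_component
      real_polynomial_function_partial_deriv real_polynomial_function_mult
      real_polynomial_function_matrix_component algebra_simps)

lemma transpose_eq_self_component:
  fixes P :: "'a^'n^'n"
  assumes "transpose P = P"
  shows "P $ a $ b = P $ b $ a"
  using arg_cong[OF assms, of "\<lambda>M. M $ b $ a"] by (simp add: transpose_def)

lemma hermite_raise_commute:
  assumes "transpose P = P" "real_polynomial_function q"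
  shows "hermite_raise P a (hermite_raise P b q) = hermite_raise P b (hermite_raise P a q)"
proof -
  have "P $ a $ b = P $ b $ a"
    using assms(1) by (rule transpose_eq_self_component)
  with assms(2) show ?thesis
    by (auto simp: hermite_raise_def[of P a] hermite_raise_def[of P b] partial_deriv_hermite_raise
        partial_deriv_commute[OF assms(2)] fun_eq_iff) (simp add: hermite_raise_def algebra_simps)
qed

section \<open>Multi-indices and index matrices\<close>

lemma mi_abs_update: "mi_abs (j(i := v)) + j i = mi_abs j + v"
proof -
  have "mi_abs j = j i + (\<Sum>p\<in>UNIV - {i}. j p)" "mi_abs (j(i := v)) = v + (\<Sum>p\<in>UNIV - {i}. j p)"
    unfolding mi_abs_def by (subst sum.remove[of _ i]; auto intro!: sum.cong)+
  then show ?thesis by simp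
qed

lemma mi_abs_eq_0_iff: "mi_abs j = 0 \<longleftrightarrow> j = (\<lambda>_. 0)"
  by (auto simp: mi_abs_def)

lemma mi_abs_pos_iff: "0 < mi_abs j \<longleftrightarrow> (\<exists>i. 0 < j i)"
proof -
  have "mi_abs j \<noteq> 0 \<longleftrightarrow> j \<noteq> (\<lambda>_. 0)"
    by (simp add: mi_abs_eq_0_iff)
  then show ?thesis
    by (auto simp: fun_eq_iff)
qed

lemma mi_abs_decrement: "0 < j i \<Longrightarrow> mi_abs (j(i := j i - 1)) < mi_abs j"
  using mi_abs_update[of j i "j i - 1"] by simp

lemma mi_fact_decrement:
  assumes "0 < k l"
  shows "mi_fact k = real (k l) * mi_fact (k(l := k l - 1))"
proof -
  have "mi_fact k = fact (k l) * (\<Prod>p\<in>UNIV - {l}. fact (k p))"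
    "mi_fact (k(l := k l - 1)) = fact (k l - 1) * (\<Prod>p\<in>UNIV - {l}. fact (k p))"
    unfolding mi_fact_def by (subst prod.remove[of _ l]; auto intro!: prod.cong)+
  moreover have "(fact (k l) :: real) = real (k l) * fact (k l - 1)"
    using assms by (metis fact_reduce of_nat_fact)
  ultimately show ?thesis
    by simp
qed

lemma sum_mi_decrement:
  fixes c f :: "'n::finite \<Rightarrow> real"
  assumes "0 < k a"
  shows "(\<Sum>l\<in>UNIV. c l * real ((k(a := k a - 1)) l) * f l) + c a * f a =
    (\<Sum>l\<in>UNIV. c l * real (k l) * f l)"
proof -
  have "c l * real (k l) * f l = c l * real ((k(a := k a - 1)) l) * f l + (if l = a then c l * f l else 0)" for l
    using assms by (simp add: of_nat_diff algebra_simps)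
  then show ?thesis
    by (simp add: sum.distrib)
qed

definition index_mat_sum :: "real^'n^'n \<Rightarrow> ('n::finite \<Rightarrow> nat) \<Rightarrow> ('n \<Rightarrow> nat) \<Rightarrow> real" where
  "index_mat_sum P j k = (\<Sum>\<theta>\<in>index_mats j k. mat_pow P \<theta> / mat_fact \<theta>)"

definition index_mat_incr :: "'n \<Rightarrow> 'n \<Rightarrow> ('n \<Rightarrow> 'n \<Rightarrow> nat) \<Rightarrow> 'n \<Rightarrow> 'n \<Rightarrow> nat" where
  "index_mat_incr i l \<theta> = (\<lambda>p q. \<theta> p q + (if p = i \<and> q = l then 1 else 0))"

lemma mat_pow_index_mat_incr: "mat_pow P (index_mat_incr i l \<theta>) = P $ i $ l * mat_pow P \<theta>"
proof -
  have "(\<Prod>q\<in>UNIV. P $ p $ q ^ (if p = i \<and> q = l then 1 else 0)) = (if p = i then P $ i $ l else 1)" for p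
    by (cases "p = i") (simp_all add: if_distrib[of "power _"] prod.delta' cong: if_cong)
  then show ?thesis
    by (simp add: mat_pow_def index_mat_incr_def power_add prod.distrib prod.delta' if_distrib[of "power _"] cong: if_cong)
qed

lemma mat_fact_index_mat_incr: "mat_fact (index_mat_incr i l \<theta>) = real (Suc (\<theta> i l)) * mat_fact \<theta>"
proof -
  have "mat_fact (index_mat_incr i l \<theta>) =
      (\<Prod>p\<in>UNIV. \<Prod>q\<in>UNIV. (if p = i \<and> q = l then real (Suc (\<theta> p q)) else 1) * fact (\<theta> p q))"
    unfolding mat_fact_def index_mat_incr_def by (intro prod.cong refl) auto
  moreover have "(\<Prod>q\<in>UNIV. if p = i \<and> q = l then real (Suc (\<theta> p q)) else 1) =
      (if p = i then real (Suc (\<theta> i l)) else 1)" for p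
    by (cases "p = i") (simp_all add: prod.delta' cong: if_cong)
  ultimately show ?thesis
    by (simp add: mat_fact_def prod.distrib prod.delta' cong: if_cong)
qed

lemma index_mats_entry_le: "\<theta> \<in> index_mats j k \<Longrightarrow> \<theta> p q \<le> j p" "\<theta> \<in> index_mats j k \<Longrightarrow> \<theta> p q \<le> k q"
  using member_le_sum[of q UNIV "\<theta> p"] member_le_sum[of p UNIV "\<lambda>p. \<theta> p q"]
  by (auto simp: index_mats_def)

lemma finite_index_mats: "finite (index_mats j k)"
proof (rule finite_subset)
  show "index_mats j k \<subseteq> PiE UNIV (\<lambda>p. PiE UNIV (\<lambda>q. {..j p}))"
    by (auto simp: PiE_UNIV_domain index_mats_entry_le)
qed (simp add: finite_PiE)

lemma mi_abs_eq_if_index_mats: "\<theta> \<in> index_mats j k \<Longrightarrow> mi_abs j = mi_abs k"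
  using sum.swap[of \<theta> UNIV UNIV] by (simp add: index_mats_def mi_abs_def)

lemma row_sum_index_mat_incr:
  fixes \<theta> :: "'n::finite \<Rightarrow> 'n \<Rightarrow> nat"
  shows "(\<Sum>q\<in>UNIV. index_mat_incr i l \<theta> p q) = (\<Sum>q\<in>UNIV. \<theta> p q) + (if p = i then 1 else 0)"
  by (cases "p = i") (simp_all add: index_mat_incr_def sum.distrib sum.delta sum.delta')

lemma col_sum_index_mat_incr:
  fixes \<theta> :: "'n::finite \<Rightarrow> 'n \<Rightarrow> nat"
  shows "(\<Sum>p\<in>UNIV. index_mat_incr i l \<theta> p q) = (\<Sum>p\<in>UNIV. \<theta> p q) + (if q = l then 1 else 0)"
  by (cases "q = l") (simp_all add: index_mat_incr_def sum.distrib sum.delta sum.delta')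

lemma index_mats_pos_entry:
  assumes "0 < j i" "0 < k l"
  shows "{\<theta> \<in> index_mats j k. 0 < \<theta> i l} =
    index_mat_incr i l ` index_mats (j(i := j i - 1)) (k(l := k l - 1))"
proof (intro equalityI subsetI)
  fix \<theta> assume \<theta>: "\<theta> \<in> {\<theta> \<in> index_mats j k. 0 < \<theta> i l}"
  define \<eta> where "\<eta> = (\<lambda>p q. \<theta> p q - (if p = i \<and> q = l then 1 else 0))"
  have "\<theta> = index_mat_incr i l \<eta>"
    using \<theta> by (auto simp: \<eta>_def index_mat_incr_def fun_eq_iff)
  moreover have "\<eta> \<in> index_mats (j(i := j i - 1)) (k(l := k l - 1))"
  proof -
    have "(\<Sum>q\<in>UNIV. \<eta> p q) + (if p = i then 1 else 0) = j p" for p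
      using \<theta> \<open>\<theta> = index_mat_incr i l \<eta>\<close> row_sum_index_mat_incr[of i l \<eta> p]
      by (simp add: index_mats_def)
    moreover have "(\<Sum>p\<in>UNIV. \<eta> p q) + (if q = l then 1 else 0) = k q" for q
      using \<theta> \<open>\<theta> = index_mat_incr i l \<eta>\<close> col_sum_index_mat_incr[of i l \<eta> q]
      by (simp add: index_mats_def)
    ultimately show ?thesis
      unfolding index_mats_def by (force split: if_splits)
  qed
  ultimately show "\<theta> \<in> index_mat_incr i l ` index_mats (j(i := j i - 1)) (k(l := k l - 1))"
    by blast
next
  fix \<theta> assume "\<theta> \<in> index_mat_incr i l ` index_mats (j(i := j i - 1)) (k(l := k l - 1))"
  then show "\<theta> \<in> {\<theta> \<in> index_mats j k. 0 < \<theta> i l}"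
    using assms by (auto simp: index_mats_def row_sum_index_mat_incr col_sum_index_mat_incr)
      (simp add: index_mat_incr_def)
qed

lemma sum_index_mats_times_entry:
  assumes "0 < j i"
  shows "(\<Sum>\<theta>\<in>index_mats j k. real (\<theta> i l) * (mat_pow P \<theta> / mat_fact \<theta>)) =
    (if 0 < k l then P $ i $ l * index_mat_sum P (j(i := j i - 1)) (k(l := k l - 1)) else 0)"
proof (cases "0 < k l")
  case False
  then show ?thesis
    using index_mats_entry_le(2)[of _ j k i l] by (auto intro!: sum.neutral)
next
  case True
  have "(\<Sum>\<theta>\<in>index_mats j k. real (\<theta> i l) * (mat_pow P \<theta> / mat_fact \<theta>)) =
      (\<Sum>\<theta>\<in>{\<theta> \<in> index_mats j k. 0 < \<theta> i l}. real (\<theta> i l) * (mat_pow P \<theta> / mat_fact \<theta>))"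
    by (intro sum.mono_neutral_right finite_index_mats) auto
  also have "\<dots> = (\<Sum>\<theta>\<in>index_mats (j(i := j i - 1)) (k(l := k l - 1)).
      real (Suc (\<theta> i l)) * (mat_pow P (index_mat_incr i l \<theta>) / mat_fact (index_mat_incr i l \<theta>)))"
    unfolding index_mats_pos_entry[of j i k l, OF assms True]
    by (subst sum.reindex) (auto simp: inj_on_def index_mat_incr_def fun_eq_iff)
  also have "\<dots> = (\<Sum>\<theta>\<in>index_mats (j(i := j i - 1)) (k(l := k l - 1)). P $ i $ l * (mat_pow P \<theta> / mat_fact \<theta>))"
    by (simp add: mat_pow_index_mat_incr mat_fact_index_mat_incr del: of_nat_Suc)
  finally show ?thesis
    using True by (simp add: index_mat_sum_def sum_distrib_left)
qed

lemma index_mat_sum_step: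
  assumes "0 < j i"
  shows "real (j i) * index_mat_sum P j k =
    (\<Sum>l\<in>UNIV. if 0 < k l then P $ i $ l * index_mat_sum P (j(i := j i - 1)) (k(l := k l - 1)) else 0)"
proof -
  have "real (j i) * index_mat_sum P j k =
      (\<Sum>\<theta>\<in>index_mats j k. real (j i) * (mat_pow P \<theta> / mat_fact \<theta>))"
    by (simp add: index_mat_sum_def sum_distrib_left)
  also have "\<dots> = (\<Sum>\<theta>\<in>index_mats j k. \<Sum>l\<in>UNIV. real (\<theta> i l) * (mat_pow P \<theta> / mat_fact \<theta>))"
  proof (intro sum.cong refl)
    fix \<theta> assume "\<theta> \<in> index_mats j k"
    then have "j i = (\<Sum>l\<in>UNIV. \<theta> i l)"
      by (simp add: index_mats_def)
    then show "real (j i) * (mat_pow P \<theta> / mat_fact \<theta>) =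
        (\<Sum>l\<in>UNIV. real (\<theta> i l) * (mat_pow P \<theta> / mat_fact \<theta>))"
      by (simp only: of_nat_sum sum_distrib_right)
  qed
  also have "\<dots> = (\<Sum>l\<in>UNIV. \<Sum>\<theta>\<in>index_mats j k. real (\<theta> i l) * (mat_pow P \<theta> / mat_fact \<theta>))"
    by (rule sum.swap)
  finally show ?thesis
    by (simp only: sum_index_mats_times_entry[of j i, OF assms])
qed

lemma index_mats_zero: "index_mats (\<lambda>_. 0) (\<lambda>_. 0) = {\<lambda>_ _. 0}"
  by (auto simp: index_mats_def fun_eq_iff)

lemma index_mat_sum_zero: "index_mat_sum P (\<lambda>_. 0) (\<lambda>_. 0) = 1"
  by (simp add: index_mat_sum_def index_mats_zero mat_pow_def mat_fact_def)

lemma index_mat_sum_eq_0: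
  assumes "mi_abs j \<noteq> mi_abs k"
  shows "index_mat_sum P j k = 0"
proof -
  have "index_mats j k = {}"
    using assms mi_abs_eq_if_index_mats by blast
  then show ?thesis
    by (simp add: index_mat_sum_def)
qed

section \<open>Integration on Euclidean space\<close>

lemma power_times_gaussian_le:
  fixes c r :: real
  assumes "0 < c" "0 \<le> r"
  shows "(1 + r) ^ d * exp (- c * r\<^sup>2 / 4) \<le> exp ((real d)\<^sup>2 / c)"
proof -
  have "(1 + r) ^ d \<le> exp (real d * r)"
    using power_mono[OF exp_ge_add_one_self[of r], of d] assms(2)
    by (simp add: add.commute exp_of_nat_mult)
  moreover have "real d * r - c * r\<^sup>2 / 4 \<le> (real d)\<^sup>2 / c"
  proof -
    have "0 \<le> (real d - c * r / 2)\<^sup>2 / c"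
      using assms(1) by simp
    then show ?thesis
      using assms(1) by (simp add: field_simps power2_eq_square)
  qed
  ultimately have "(1 + r) ^ d * exp (- c * r\<^sup>2 / 4) \<le> exp (real d * r) * exp (- c * r\<^sup>2 / 4)"
    by (intro mult_right_mono) auto
  also have "\<dots> \<le> exp ((real d)\<^sup>2 / c)"
    using \<open>real d * r - c * r\<^sup>2 / 4 \<le> (real d)\<^sup>2 / c\<close> by (simp add: mult_exp_exp)
  finally show ?thesis .
qed

lemma integrable_lborel_scaleR:
  fixes f :: "'a::euclidean_space \<Rightarrow> real"
  assumes "integrable lborel f" "f \<in> borel_measurable borel" "c \<noteq> 0"
  shows "integrable lborel (\<lambda>x. f (c *\<^sub>R x))"
proof -
  have "integrable (density (distr lborel borel (\<lambda>x. c *\<^sub>R x)) (\<lambda>_. ennreal (\<bar>c\<bar> ^ DIM('a)))) f"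
    using assms(1) lborel_affine[OF assms(3), where t = "0::'a"] by simp
  then have "integrable lborel (\<lambda>x. \<bar>c\<bar> ^ DIM('a) * f (c *\<^sub>R x))"
    using assms(2) by (simp add: integrable_density integrable_distr_eq)
  then have "integrable lborel (\<lambda>x. (1 / \<bar>c\<bar> ^ DIM('a)) * (\<bar>c\<bar> ^ DIM('a) * f (c *\<^sub>R x)))"
    by (rule integrable_mult_right)
  with assms(3) show ?thesis
    by simp
qed

lemma
  fixes g :: "'a::euclidean_space \<Rightarrow> real"
  assumes "g \<in> borel_measurable borel"
  shows integral_lborel_translate: "(\<integral>x. g (x + c) \<partial>lborel) = (\<integral>x. g x \<partial>lborel)"
    and integrable_lborel_translate: "integrable lborel (\<lambda>x. g (x + c)) \<longleftrightarrow> integrable lborel g"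
proof -
  have "(\<integral>x. g x \<partial>lborel) = (\<integral>x. g (c + x) \<partial>lborel)"
    using integral_distr[of "(+) c" lborel borel g] assms by (simp add: lborel_distr_plus)
  then show "(\<integral>x. g (x + c) \<partial>lborel) = (\<integral>x. g x \<partial>lborel)"
    by (simp add: add.commute)
  have "integrable lborel g \<longleftrightarrow> integrable lborel (\<lambda>x. g (c + x))"
    using integrable_distr_eq[of "(+) c" lborel borel g] assms by (simp add: lborel_distr_plus)
  then show "integrable lborel (\<lambda>x. g (x + c)) \<longleftrightarrow> integrable lborel g"
    by (simp add: add.commute)
qed

lemma integral_line_derivative_eq_0:
  fixes F G :: "'a::euclidean_space \<Rightarrow> real"
  assumes deriv: "\<And>x t. ((\<lambda>t. F (x + t *\<^sub>R e)) has_real_derivative G (x + t *\<^sub>R e)) (at t)"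
    and cont: "continuous_on UNIV F" "continuous_on UNIV G"
    and int: "integrable lborel F" "integrable lborel G"
  shows "(\<integral>x. G x \<partial>lborel) = 0"
proof -
  have [measurable]: "F \<in> borel_measurable borel" "G \<in> borel_measurable borel"
    using cont by (simp_all add: borel_measurable_continuous_onI)
  define h where "h = (\<lambda>(s::real, x). indicator {0..1} s * G (x + s *\<^sub>R e))"
  have h_integrable: "integrable (lborel \<Otimes>\<^sub>M lborel) h"
  proof (rule lborel_pair.Fubini_integrable)
    show "h \<in> borel_measurable (lborel \<Otimes>\<^sub>M lborel)"
      unfolding h_def by measurable
    have "(\<integral>x. norm (h (s, x)) \<partial>lborel) = indicator {0..1} s * (\<integral>x. norm (G x) \<partial>lborel)" for s
      using integral_lborel_translate[of "\<lambda>x. norm (G x)" "s *\<^sub>R e"]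
      by (simp add: h_def abs_mult indicator_def)
    then show "integrable lborel (\<lambda>s. \<integral>x. norm (h (s, x)) \<partial>lborel)"
      by (simp add: mult.commute)
    show "AE s in lborel. integrable lborel (\<lambda>x. h (s, x))"
      using int(2) integrable_lborel_translate[of G "s *\<^sub>R e" for s] by (simp add: h_def)
  qed
  have FTC: "(\<integral>s. h (s, x) \<partial>lborel) = F (x + e) - F x" for x
  proof -
    have "(\<integral>s. indicator {0..1} s *\<^sub>R G (x + s *\<^sub>R e) \<partial>lborel) = F (x + 1 *\<^sub>R e) - F (x + 0 *\<^sub>R e)"
    proof (rule integral_FTC_atLeastAtMost)
      show "((\<lambda>s. F (x + s *\<^sub>R e)) has_vector_derivative G (x + s *\<^sub>R e)) (at s within {0..1})" for s
        using deriv[of x s] by (simp add: has_real_derivative_iff_has_vector_derivative has_vector_derivative_at_within)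
      show "continuous_on {0..1} (\<lambda>s. G (x + s *\<^sub>R e))"
        by (intro continuous_on_compose2[OF cont(2)] continuous_intros) auto
    qed simp
    then show ?thesis
      by (simp add: h_def)
  qed
  have "(\<integral>x. G x \<partial>lborel) = (\<integral>s. (\<integral>x. G x \<partial>lborel) * indicator {0..1::real} s \<partial>lborel)"
    by (simp add: measure_lborel_Icc)
  also have "\<dots> = (\<integral>s. (\<integral>x. h (s, x) \<partial>lborel) \<partial>lborel)"
    using integral_lborel_translate[of G "s *\<^sub>R e" for s] by (simp add: h_def mult.commute)
  also have "\<dots> = (\<integral>x. (\<integral>s. h (s, x) \<partial>lborel) \<partial>lborel)"
    using h_integrable by (intro lborel_pair.Fubini_integral[symmetric]) (simp add: h_def case_prod_beta')
  also have "\<dots> = (\<integral>x. F (x + e) \<partial>lborel) - (\<integral>x. F x \<partial>lborel)"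
    using int(1) integrable_lborel_translate[of F e] by (simp add: FTC)
  also have "\<dots> = 0"
    by (simp add: integral_lborel_translate)
  finally show ?thesis .
qed

section \<open>Hermite polynomials of a Gaussian density\<close>

locale gaussian_density =
  fixes S :: "real^'n::finite^'n"
  assumes sym_posdef: "sym_posdef S"
begin

lemma matrix_inv_mult: "S ** matrix_inv S = mat 1" "matrix_inv S ** S = mat 1"
proof -
  have "S *v x = 0 \<Longrightarrow> x = 0" for x
    using sym_posdef by (fastforce simp: sym_posdef_def)
  then obtain B where "B ** S = mat 1"
    using matrix_left_invertible_ker by blast
  then have "\<exists>B. S ** B = mat 1 \<and> B ** S = mat 1"
    using matrix_left_right_inverse by blast
  then show "S ** matrix_inv S = mat 1" "matrix_inv S ** S = mat 1"
    unfolding matrix_inv_def by (metis (mono_tags, lifting) someI_ex)+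
qed

lemma det_nonzero: "det S \<noteq> 0"
  using matrix_inv_mult invertible_det_nz invertible_def by blast

lemma transpose_matrix_inv: "transpose (matrix_inv S) = matrix_inv S"
proof -
  have "transpose (matrix_inv S) ** S = mat 1"
    using arg_cong[OF matrix_inv_mult(1), of transpose] sym_posdef
    by (simp add: matrix_transpose_mul sym_posdef_def)
  then have "transpose (matrix_inv S) = transpose (matrix_inv S) ** (S ** matrix_inv S)"
    by (simp add: matrix_inv_mult matrix_mul_rid)
  also have "\<dots> = matrix_inv S"
    by (simp add: matrix_mul_assoc \<open>transpose (matrix_inv S) ** S = mat 1\<close> matrix_mul_lid)
  finally show ?thesis .
qed

lemma matrix_inv_posdef:
  assumes "x \<noteq> 0"
  shows "0 < x \<bullet> (matrix_inv S *v x)"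
proof -
  define y where "y = matrix_inv S *v x"
  have "S *v y = x"
    by (simp add: y_def matrix_vector_mul_assoc matrix_inv_mult)
  with assms have "y \<noteq> 0"
    by auto
  then have "0 < y \<bullet> (S *v y)"
    using sym_posdef by (simp add: sym_posdef_def)
  with \<open>S *v y = x\<close> show ?thesis
    by (simp add: y_def inner_commute)
qed

lemma gauss_density_eq:
  "gauss_density S x = gauss_density S 0 * exp (- (1 / 2) * (x \<bullet> (matrix_inv S *v x)))"
  by (simp add: gauss_density_def)

lemma gauss_density_pos: "0 < gauss_density S x"
  using det_nonzero by (simp add: gauss_density_def)

lemma gauss_density_nonzero [simp]: "gauss_density S x \<noteq> 0"
  using gauss_density_pos[of x] by simp

lemma continuous_on_gauss_density: "continuous_on A (gauss_density S)"
  by (subst gauss_density_eq[abs_def])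
     (intro continuous_intros continuous_on_real_polynomial_function real_polynomial_function_quadratic_form)

lemma borel_measurable_gauss_density [measurable]: "gauss_density S \<in> borel_measurable borel"
  by (rule borel_measurable_continuous_onI[OF continuous_on_gauss_density])

lemma has_real_derivative_poly_times_gauss_density:
  assumes "real_polynomial_function q"
  shows "((\<lambda>t. q (x + t *\<^sub>R axis i 1) * gauss_density S (x + t *\<^sub>R axis i 1)) has_real_derivative
      - hermite_raise (matrix_inv S) i q (x + u *\<^sub>R axis i 1) * gauss_density S (x + u *\<^sub>R axis i 1)) (at u)"
proof -
  let ?z = "x + u *\<^sub>R axis i 1"
  have "((\<lambda>t. (x + t *\<^sub>R axis i 1) \<bullet> (matrix_inv S *v (x + t *\<^sub>R axis i 1))) has_real_derivative
      2 * (matrix_inv S *v ?z) $ i) (at u)"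
    using has_real_derivative_partial_deriv[OF real_polynomial_function_quadratic_form[of "matrix_inv S"], where x = x and i = i and u = u]
    by (simp add: partial_deriv_quadratic_form[OF transpose_matrix_inv])
  then have "((\<lambda>t. gauss_density S (x + t *\<^sub>R axis i 1)) has_real_derivative
      - (matrix_inv S *v ?z) $ i * gauss_density S ?z) (at u)"
    by (subst (1 2) gauss_density_eq) (auto intro!: derivative_eq_intros)
  from DERIV_mult[OF has_real_derivative_partial_deriv[OF assms] this] show ?thesis
    by (simp add: hermite_raise_def algebra_simps)
qed

lemma partial_deriv_poly_times_gauss_density:
  "real_polynomial_function q \<Longrightarrow> partial_deriv i (\<lambda>x. q x * gauss_density S x) =
    (\<lambda>x. - hermite_raise (matrix_inv S) i q x * gauss_density S x)"
  by (intro ext partial_deriv_eqI) (use has_real_derivative_poly_times_gauss_density[where u = 0] in simp)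

lemma mi_deriv_gauss_density:
  "mi_deriv j (gauss_density S) = (\<lambda>x. (-1) ^ mi_abs j * hermite j S x * gauss_density S x)"
  by (simp add: hermite_def fun_eq_iff)

lemma hermite_zero_index: "hermite (\<lambda>_. 0) S = (\<lambda>_. 1)"
  by (simp add: hermite_def mi_deriv_def mi_abs_def fun_eq_iff)

lemma hermite_eq_raise_SOME:
  assumes "real_polynomial_function (hermite (j(i := j i - 1)) S)"
    and "0 < j i" and i: "i = (SOME i. 0 < j i)"
  shows "hermite j S = hermite_raise (matrix_inv S) i (hermite (j(i := j i - 1)) S)"
proof -
  define H where "H = hermite (j(i := j i - 1)) S"
  define m where "m = mi_abs (j(i := j i - 1))"
  have j: "mi_abs j = Suc m"
    using mi_abs_update[of j i "j i - 1"] \<open>0 < j i\<close> by (simp add: m_def)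
  have "mi_deriv j (gauss_density S) = partial_deriv i (mi_deriv (j(i := j i - 1)) (gauss_density S))"
    by (simp add: mi_deriv_def j m_def Let_def flip: i)
  also have "\<dots> = partial_deriv i (\<lambda>x. ((-1) ^ m * H x) * gauss_density S x)"
    by (simp add: mi_deriv_gauss_density H_def m_def mult.assoc fun_eq_iff)
  also have "\<dots> = (\<lambda>x. (-1) ^ Suc m * hermite_raise (matrix_inv S) i H x * gauss_density S x)"
    using assms(1) by (simp add: partial_deriv_poly_times_gauss_density hermite_raise_cmult
        real_polynomial_function.intros H_def)
  finally show ?thesis
    by (auto simp: hermite_def j H_def fun_eq_iff)
qed

lemma real_polynomial_function_hermite: "real_polynomial_function (hermite j S)"
proof (induction "mi_abs j" arbitrary: j rule: less_induct)
  case less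
  show ?case
  proof (cases "mi_abs j = 0")
    case True
    then show ?thesis
      by (simp add: mi_abs_eq_0_iff hermite_zero_index real_polynomial_function.intros)
  next
    case False
    define i where "i = (SOME i. 0 < j i)"
    have "0 < j i"
      using False mi_abs_pos_iff[of j] unfolding i_def by (metis neq0_conv someI_ex)
    then have "real_polynomial_function (hermite (j(i := j i - 1)) S)"
      using less mi_abs_decrement by blast
    with \<open>0 < j i\<close> show ?thesis
      by (simp add: hermite_eq_raise_SOME[OF _ _ i_def] real_polynomial_function_hermite_raise)
  qed
qed

(* mi_deriv differentiates in the direction picked by SOME; since the raising operators commute,
   the recursion holds in every direction i with j i > 0. *)
lemma hermite_eq_raise:
  assumes "0 < j i"
  shows "hermite j S = hermite_raise (matrix_inv S) i (hermite (j(i := j i - 1)) S)"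
  using assms
proof (induction "mi_abs j" arbitrary: j i rule: less_induct)
  case less
  define i0 where "i0 = (SOME i. 0 < j i)"
  have "0 < j i0"
    using less.prems unfolding i0_def by (metis someI_ex)
  then have i0: "hermite j S = hermite_raise (matrix_inv S) i0 (hermite (j(i0 := j i0 - 1)) S)"
    by (intro hermite_eq_raise_SOME) (simp_all add: i0_def real_polynomial_function_hermite)
  show ?case
  proof (cases "i = i0")
    case False
    define j0 where "j0 = j(i0 := j i0 - 1)"
    define j1 where "j1 = j(i := j i - 1)"
    have swap: "j0(i := j0 i - 1) = j1(i0 := j1 i0 - 1)"
      using False by (auto simp: j0_def j1_def fun_eq_iff)
    have "hermite j S = hermite_raise (matrix_inv S) i0 (hermite j0 S)"
      by (simp add: i0 j0_def)
    also have "\<dots> = hermite_raise (matrix_inv S) i0 (hermite_raise (matrix_inv S) i (hermite (j0(i := j0 i - 1)) S))"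
      using less.hyps[of j0 i] mi_abs_decrement[of j i0] \<open>0 < j i0\<close> less.prems False by (simp add: j0_def)
    also have "\<dots> = hermite_raise (matrix_inv S) i (hermite_raise (matrix_inv S) i0 (hermite (j1(i0 := j1 i0 - 1)) S))"
      unfolding swap by (rule hermite_raise_commute[OF transpose_matrix_inv real_polynomial_function_hermite])
    also have "\<dots> = hermite_raise (matrix_inv S) i (hermite j1 S)"
      using less.hyps[of j1 i0] mi_abs_decrement[of j i] less.prems \<open>0 < j i0\<close> False by (simp add: j1_def)
    finally show ?thesis by (simp add: j1_def)
  qed (simp add: i0)
qed

lemma hermite_raise_hermite:
  "hermite_raise (matrix_inv S) a (hermite k S) = hermite (k(a := Suc (k a))) S"
  using hermite_eq_raise[of "k(a := Suc (k a))" a] by simp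

lemma partial_deriv_hermite:
  "partial_deriv i (hermite k S) =
    (\<lambda>x. \<Sum>l\<in>UNIV. matrix_inv S $ i $ l * real (k l) * hermite (k(l := k l - 1)) S x)"
proof (induction "mi_abs k" arbitrary: k rule: less_induct)
  case less
  let ?P = "matrix_inv S"
  show ?case
  proof (cases "mi_abs k = 0")
    case True
    then show ?thesis
      by (simp add: mi_abs_eq_0_iff hermite_zero_index)
  next
    case False
    then obtain a where "0 < k a"
      using mi_abs_pos_iff by blast
    define k' where "k' = k(a := k a - 1)"
    have IH: "partial_deriv i (hermite k' S) =
        (\<lambda>x. \<Sum>l\<in>UNIV. ?P $ i $ l * real (k' l) * hermite (k'(l := k' l - 1)) S x)"
      using less.hyps mi_abs_decrement[of k a] \<open>0 < k a\<close> by (simp add: k'_def)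
    have raise: "real (k' l) * hermite_raise ?P a (hermite (k'(l := k' l - 1)) S) x =
        real (k' l) * hermite (k(l := k l - 1)) S x" for l x
    proof (cases "k' l = 0")
      case False
      then have "(k'(l := k' l - 1))(a := Suc ((k'(l := k' l - 1)) a)) = k(l := k l - 1)"
        using \<open>0 < k a\<close> by (auto simp: k'_def fun_eq_iff)
      then show ?thesis
        by (simp add: hermite_raise_hermite)
    qed simp
    have "partial_deriv i (hermite k S) =
        (\<lambda>x. hermite_raise ?P a (partial_deriv i (hermite k' S)) x + ?P $ a $ i * hermite k' S x)"
      using hermite_eq_raise[of k a, folded k'_def] \<open>0 < k a\<close>
      by (simp add: partial_deriv_hermite_raise real_polynomial_function_hermite)
    also have "\<dots> = (\<lambda>x. (\<Sum>l\<in>UNIV. ?P $ i $ l * real (k' l) * hermite (k(l := k l - 1)) S x)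
        + ?P $ i $ a * hermite k' S x)"
    proof -
      have "hermite_raise ?P a (partial_deriv i (hermite k' S)) =
          (\<lambda>x. \<Sum>l\<in>UNIV. ?P $ i $ l * real (k' l) * hermite_raise ?P a (hermite (k'(l := k' l - 1)) S) x)"
        unfolding IH by (rule hermite_raise_sum) (simp_all add: real_polynomial_function_hermite)
      also have "\<dots> = (\<lambda>x. \<Sum>l\<in>UNIV. ?P $ i $ l * real (k' l) * hermite (k(l := k l - 1)) S x)"
        by (simp only: mult.assoc raise)
      finally show ?thesis
        by (simp add: transpose_eq_self_component[OF transpose_matrix_inv, of a i])
    qed
    also have "\<dots> = (\<lambda>x. \<Sum>l\<in>UNIV. matrix_inv S $ i $ l * real (k l) * hermite (k(l := k l - 1)) S x)"
      unfolding k'_def by (rule ext) (rule sum_mi_decrement[of k a, OF \<open>0 < k a\<close>])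
    finally show ?thesis .
  qed
qed

end

section \<open>Gaussian moments of products of Hermite polynomials\<close>

locale gaussian_probability_density = gaussian_density +
  assumes integral_gauss_density: "(\<integral>x. gauss_density S x \<partial>lborel) = 1"
begin

lemma integrable_gauss_density: "integrable lborel (gauss_density S)"
  using integral_gauss_density not_integrable_integral_eq by fastforce

lemma integrable_gauss_density_sqrt:
  "integrable lborel (\<lambda>x. exp (- (1 / 4) * (x \<bullet> (matrix_inv S *v x))))"
proof -
  have "integrable lborel (\<lambda>x. exp (- (1 / 2) * (x \<bullet> (matrix_inv S *v x))))"
    using integrable_mult_right[OF integrable_gauss_density, of "1 / gauss_density S 0"]
    by (subst (asm) gauss_density_eq) simp
  from integrable_lborel_scaleR[OF this _, of "1 / sqrt 2"]
  show ?thesis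
    by (simp add: matrix_vector_mult_scaleR power_divide continuous_on_real_polynomial_function
        real_polynomial_function_quadratic_form borel_measurable_continuous_onI
        continuous_intros)
qed

lemma integrable_poly_times_gauss_density:
  assumes "real_polynomial_function q"
  shows "integrable lborel (\<lambda>x. q x * gauss_density S x)"
proof -
  let ?Q = "\<lambda>x. x \<bullet> (matrix_inv S *v x)"
  obtain C d where C: "\<And>x. \<bar>q x\<bar> \<le> C * (1 + norm x) ^ d"
    using real_polynomial_function_growth[OF assms] by blast
  obtain c where c: "0 < c" "\<And>x. c * (norm x)\<^sup>2 \<le> ?Q x"
    using quadratic_form_lower_bound[OF matrix_inv_posdef] by blast
  define K where "K = \<bar>C\<bar> * gauss_density S 0 * exp ((real d)\<^sup>2 / c)"
  show ?thesis
  proof (rule Bochner_Integration.integrable_bound)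
    show "integrable lborel (\<lambda>x. K * exp (- (1 / 4) * ?Q x))"
      by (intro integrable_mult_right integrable_gauss_density_sqrt)
    show "(\<lambda>x. q x * gauss_density S x) \<in> borel_measurable lborel"
      using borel_measurable_continuous_onI[OF continuous_on_real_polynomial_function[OF assms]]
      by measurable
    show "AE x in lborel. norm (q x * gauss_density S x) \<le> norm (K * exp (- (1 / 4) * ?Q x))"
    proof (rule AE_I2)
      fix x
      have "\<bar>q x\<bar> \<le> \<bar>C\<bar> * (1 + norm x) ^ d"
        using C[of x] by (rule order.trans) (simp add: mult_right_mono)
      then have "\<bar>q x\<bar> * gauss_density S x \<le> \<bar>C\<bar> * (1 + norm x) ^ d * gauss_density S x"
        using gauss_density_pos[of x] by (simp add: mult_right_mono)
      also have "\<dots> = \<bar>C\<bar> * (1 + norm x) ^ d *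
          (gauss_density S 0 * (exp (- (1 / 4) * ?Q x) * exp (- (1 / 4) * ?Q x)))"
        by (subst gauss_density_eq) (simp add: mult_exp_exp)
      also have "\<dots> \<le> \<bar>C\<bar> * (1 + norm x) ^ d * (gauss_density S 0 * (exp (- c * (norm x)\<^sup>2 / 4) * exp (- (1 / 4) * ?Q x)))"
        using c(2)[of x] gauss_density_pos[of 0] by (intro mult_left_mono mult_right_mono) auto
      also have "\<dots> \<le> K * exp (- (1 / 4) * ?Q x)"
        using power_times_gaussian_le[OF c(1) norm_ge_zero[of x], of d] gauss_density_pos[of 0]
        by (simp add: K_def ac_simps mult_left_mono mult_right_mono)
      finally show "norm (q x * gauss_density S x) \<le> norm (K * exp (- (1 / 4) * ?Q x))"
        using gauss_density_pos[of x] gauss_density_pos[of 0] by (simp add: abs_mult K_def)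
    qed
  qed
qed

lemma integral_hermite_raise_times_gauss_density:
  assumes "real_polynomial_function q"
  shows "(\<integral>x. hermite_raise (matrix_inv S) i q x * gauss_density S x \<partial>lborel) = 0"
proof -
  have "real_polynomial_function (hermite_raise (matrix_inv S) i q)"
    using assms by (rule real_polynomial_function_hermite_raise)
  then have "(\<integral>x. - hermite_raise (matrix_inv S) i q x * gauss_density S x \<partial>lborel) = 0"
    using assms
    by (intro integral_line_derivative_eq_0[where F = "\<lambda>x. q x * gauss_density S x" and e = "axis i 1"]
        has_real_derivative_poly_times_gauss_density integrable_poly_times_gauss_density
        real_polynomial_function_minus continuous_intros continuous_on_real_polynomial_function
        continuous_on_gauss_density)
  then show ?thesis
    by simp
qed

lemma integrable_hermite_product:
  "integrable lborel (\<lambda>x. hermite j S x * hermite k S x * gauss_density S x)"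
  by (intro integrable_poly_times_gauss_density real_polynomial_function_mult real_polynomial_function_hermite)

lemma integral_hermite_product_step:
  assumes "0 < j i"
  shows "(\<integral>x. hermite j S x * hermite k S x * gauss_density S x \<partial>lborel) =
    (\<Sum>l\<in>UNIV. matrix_inv S $ i $ l * real (k l) *
      (\<integral>x. hermite (j(i := j i - 1)) S x * hermite (k(l := k l - 1)) S x * gauss_density S x \<partial>lborel))"
proof -
  let ?P = "matrix_inv S"
  define H where "H = hermite (j(i := j i - 1)) S"
  have H: "real_polynomial_function H"
    by (simp add: H_def real_polynomial_function_hermite)
  have "hermite j S x * hermite k S x =
      hermite_raise ?P i (\<lambda>x. H x * hermite k S x) x + H x * partial_deriv i (hermite k S) x" for x
    using assms H by (simp add: hermite_eq_raise[of j i] H_def hermite_raise_mult real_polynomial_function_hermite)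
  then have "(\<integral>x. hermite j S x * hermite k S x * gauss_density S x \<partial>lborel) =
      (\<integral>x. hermite_raise ?P i (\<lambda>x. H x * hermite k S x) x * gauss_density S x \<partial>lborel) +
      (\<integral>x. H x * partial_deriv i (hermite k S) x * gauss_density S x \<partial>lborel)"
    using H by (simp add: distrib_right Bochner_Integration.integral_add integrable_poly_times_gauss_density
        real_polynomial_function_hermite_raise real_polynomial_function_mult real_polynomial_function_hermite
        real_polynomial_function_partial_deriv)
  also have "\<dots> = (\<integral>x. H x * partial_deriv i (hermite k S) x * gauss_density S x \<partial>lborel)"
    using H by (simp add: integral_hermite_raise_times_gauss_density real_polynomial_function_mult
        real_polynomial_function_hermite)
  also have "\<dots> = (\<integral>x. (\<Sum>l\<in>UNIV. ?P $ i $ l * real (k l) *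
      (H x * hermite (k(l := k l - 1)) S x * gauss_density S x)) \<partial>lborel)"
    by (simp add: partial_deriv_hermite sum_distrib_left sum_distrib_right algebra_simps)
  also have "\<dots> = (\<Sum>l\<in>UNIV. ?P $ i $ l * real (k l) *
      (\<integral>x. H x * hermite (k(l := k l - 1)) S x * gauss_density S x \<partial>lborel))"
    by (simp add: H_def integrable_hermite_product)
  finally show ?thesis
    by (simp add: H_def)
qed

lemma integral_hermite_times_gauss_density:
  "(\<integral>x. hermite k S x * gauss_density S x \<partial>lborel) = (if mi_abs k = 0 then 1 else 0)"
proof (cases "mi_abs k = 0")
  case False
  then obtain l where "0 < k l"
    using mi_abs_pos_iff by blast
  from integral_hermite_product_step[of k l "\<lambda>_. 0", OF this] False show ?thesis
    by (simp add: hermite_zero_index)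
qed (simp add: mi_abs_eq_0_iff hermite_zero_index integral_gauss_density)

lemma integral_hermite_product:
  "(\<integral>x. hermite j S x * hermite k S x * gauss_density S x \<partial>lborel) =
    mi_fact j * mi_fact k * index_mat_sum (matrix_inv S) j k"
proof (induction "mi_abs j" arbitrary: j k rule: less_induct)
  case less
  let ?P = "matrix_inv S"
  show ?case
  proof (cases "mi_abs j = 0")
    case True
    then have j: "j = (\<lambda>_. 0)"
      by (simp add: mi_abs_eq_0_iff)
    show ?thesis
    proof (cases "mi_abs k = 0")
      case True
      then show ?thesis
        by (simp add: j mi_abs_eq_0_iff hermite_zero_index mi_fact_def index_mat_sum_zero
            integral_gauss_density)
    next
      case False
      with \<open>mi_abs j = 0\<close> show ?thesis
        by (simp add: j hermite_zero_index integral_hermite_times_gauss_density index_mat_sum_eq_0)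
    qed
  next
    case False
    then obtain i where "0 < j i"
      using mi_abs_pos_iff by blast
    define j' where "j' = j(i := j i - 1)"
    have IH: "(\<integral>x. hermite j' S x * hermite k' S x * gauss_density S x \<partial>lborel) =
        mi_fact j' * mi_fact k' * index_mat_sum ?P j' k'" for k'
      using less.hyps mi_abs_decrement[of j i] \<open>0 < j i\<close> by (simp add: j'_def)
    have "(\<integral>x. hermite j S x * hermite k S x * gauss_density S x \<partial>lborel) =
        (\<Sum>l\<in>UNIV. ?P $ i $ l * real (k l) * (mi_fact j' * mi_fact (k(l := k l - 1)) *
          index_mat_sum ?P j' (k(l := k l - 1))))"
      by (simp only: integral_hermite_product_step[of j i k, OF \<open>0 < j i\<close>] j'_def[symmetric] IH)
    also have "\<dots> = mi_fact j' * mi_fact k * (\<Sum>l\<in>UNIV.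
        if 0 < k l then ?P $ i $ l * index_mat_sum ?P j' (k(l := k l - 1)) else 0)"
      unfolding sum_distrib_left
      by (intro sum.cong refl, rename_tac l, case_tac "0 < k l") (simp_all add: mi_fact_decrement[of k])
    also have "\<dots> = mi_fact j * mi_fact k * index_mat_sum ?P j k"
      using index_mat_sum_step[of j i, OF \<open>0 < j i\<close>, folded j'_def]
        mi_fact_decrement[of j i, OF \<open>0 < j i\<close>, folded j'_def]
      by simp
    finally show ?thesis .
  qed
qed

end

theorem proposition8:
  fixes M :: "'a measure" and X :: "'a \<Rightarrow> real^'n" and S :: "real^'n^'n"
  assumes "prob_space M"
    and "sym_posdef S"
    and "distributed M lborel X (\<lambda>x. ennreal (gauss_density S x))"
  shows "(\<forall>j k. (\<integral>\<omega>. hermite j S (X \<omega>) * hermite k S (X \<omega>) \<partial>M) =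
            (if mi_abs j = mi_abs k
             then mi_fact j * mi_fact k *
                  (\<Sum>\<theta>\<in>index_mats j k. mat_pow (matrix_inv S) \<theta> / mat_fact \<theta>)
             else 0))
       \<and> (\<forall>j. (\<integral>\<omega>. (hermite j S (X \<omega>))\<^sup>2 \<partial>M) =
            (mi_fact j)\<^sup>2 * (\<Sum>\<theta>\<in>index_mats j j. mat_pow (matrix_inv S) \<theta> / mat_fact \<theta>))"
proof -
  interpret prob_space M by fact
  interpret gaussian_density S by unfold_locales fact
  have expectation: "(\<integral>\<omega>. f (X \<omega>) \<partial>M) = (\<integral>x. f x * gauss_density S x \<partial>lborel)"
    if "f \<in> borel_measurable borel" for f
    using distributed_integral[OF assms(3), of f] that gauss_density_pos by (simp add: less_imp_le mult.commute)
  interpret gaussian_probability_density S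
    using expectation[of "\<lambda>_. 1"] prob_space by unfold_locales simp
  have "(\<integral>\<omega>. hermite j S (X \<omega>) * hermite k S (X \<omega>) \<partial>M) =
      mi_fact j * mi_fact k * index_mat_sum (matrix_inv S) j k" for j k
  proof -
    have "(\<lambda>x. hermite j S x * hermite k S x) \<in> borel_measurable borel"
      by (intro borel_measurable_continuous_onI continuous_on_real_polynomial_function
          real_polynomial_function_mult real_polynomial_function_hermite)
    from expectation[OF this] show ?thesis
      by (simp add: integral_hermite_product)
  qed
  then show ?thesis
    by (simp add: index_mat_sum_eq_0 power2_eq_square flip: index_mat_sum_def)
qed

end
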